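(* For every finitary Boolean function $f$ and every $k\in\mathbb N$, $$E_f(k)=\sum_{S\subset\mathbb N,\,|S|=k}\widehat f(S)^2\le\delta_f\,k\,\|f\|_2^2.$$
   Context: Let $\Omega=\{-1,1\}$ and $\Omega^\infty=\{-1,1\}^{\mathbb N}$ with the uniform product probability measure; $\omega$ denotes a uniformly random element. A Boolean function is a measurable map $f:\Omega^\infty\to\Omega$. For finite $S\subset\mathbb N$, $\chi_S(\omega)=\prod_{i\in S}\omega_i$, $\widehat f(S)=\mathbb E[f\chi_S]$; sums over $S$ range over finite subsets. A set $W\subseteq\mathbb N$ is a witness set for $f$ at $\omega$ if there is an event $A$ with $\mathbb P(A)=1$ such that for all $\tilde\omega\in A$: if $\tilde\omega_i=\omega_i$ for all $i\in W$ then $f(\tilde\omega)=f(\omega)$. $f$ is finitary if almost surely a finite witness set exists. A (randomised) algorithm $A$ for a finitary $f$ queries bits of $\omega$ one at a time, each next index chosen as a function of the bits queried so far and independent auxiliary randomness, and stops once the set of queried bits is a witness set for $f$ at $\omega$; it must query almost surely only finitely many bits. $W(A)$ is the set of queried bits. The revealment of $f$ is $\delta_f=\inf_A\sup_i\mathbb P(i\in W(A))$ over all such algorithms. *)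

theory Defs
  imports "HOL-Probability.Probability"
begin

text \<open>Bits are encoded as booleans; the value in \<open>{-1,1}\<close> of a bit is \<open>sgnb\<close>.\<close>
definition sgnb :: "bool \<Rightarrow> real" where
  "sgnb b = (if b then 1 else -1)"

definition coin :: "bool measure" where
  "coin = measure_pmf (pmf_of_set UNIV)"

definition Cube :: "(nat \<Rightarrow> bool) measure" where
  "Cube = PiM UNIV (\<lambda>_. coin)"

definition boolean_function :: "((nat \<Rightarrow> bool) \<Rightarrow> real) \<Rightarrow> bool" where
  "boolean_function f \<longleftrightarrow> f \<in> borel_measurable Cube \<and> (\<forall>\<omega>. f \<omega> \<in> {-1, 1})"

definition chi :: "nat set \<Rightarrow> (nat \<Rightarrow> bool) \<Rightarrow> real" where
  "chi S \<omega> = (\<Prod>i\<in>S. sgnb (\<omega> i))"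

definition fourier :: "((nat \<Rightarrow> bool) \<Rightarrow> real) \<Rightarrow> nat set \<Rightarrow> real" where
  "fourier f S = (\<integral>\<omega>. f \<omega> * chi S \<omega> \<partial>Cube)"

definition witness :: "((nat \<Rightarrow> bool) \<Rightarrow> real) \<Rightarrow> nat set \<Rightarrow> (nat \<Rightarrow> bool) \<Rightarrow> bool" where
  "witness f W \<omega> \<longleftrightarrow> (\<exists>A\<in>sets Cube. measure Cube A = 1 \<and>
      (\<forall>\<omega>'\<in>A. (\<forall>i\<in>W. \<omega>' i = \<omega> i) \<longrightarrow> f \<omega>' = f \<omega>))"

definition finitary :: "((nat \<Rightarrow> bool) \<Rightarrow> real) \<Rightarrow> bool" where
  "finitary f \<longleftrightarrow> (AE \<omega> in Cube. \<exists>W. finite W \<and> witness f W \<omega>)"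

text \<open>A randomised algorithm: \<open>nx r h\<close> is the next index to query, given the auxiliary
  randomness \<open>r\<close> (an independent sequence of fair coins) and the history \<open>h\<close> of
  (index, value) pairs queried so far.\<close>
type_synonym algorithm = "(nat \<Rightarrow> bool) \<Rightarrow> (nat \<times> bool) list \<Rightarrow> nat"

fun hist :: "algorithm \<Rightarrow> (nat \<Rightarrow> bool) \<Rightarrow> (nat \<Rightarrow> bool) \<Rightarrow> nat \<Rightarrow> (nat \<times> bool) list" where
  "hist nx r \<omega> 0 = []"
| "hist nx r \<omega> (Suc n) = (let h = hist nx r \<omega> n; i = nx r h in h @ [(i, \<omega> i)])"

definition queried :: "algorithm \<Rightarrow> (nat \<Rightarrow> bool) \<Rightarrow> (nat \<Rightarrow> bool) \<Rightarrow> nat \<Rightarrow> nat set" where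
  "queried nx r \<omega> n = fst ` set (hist nx r \<omega> n)"

definition stop_time :: "((nat \<Rightarrow> bool) \<Rightarrow> real) \<Rightarrow> algorithm \<Rightarrow> (nat \<Rightarrow> bool) \<Rightarrow> (nat \<Rightarrow> bool) \<Rightarrow> nat" where
  "stop_time f nx r \<omega> = (LEAST n. witness f (queried nx r \<omega> n) \<omega>)"

definition revealed :: "((nat \<Rightarrow> bool) \<Rightarrow> real) \<Rightarrow> algorithm \<Rightarrow> (nat \<Rightarrow> bool) \<Rightarrow> (nat \<Rightarrow> bool) \<Rightarrow> nat set" where
  "revealed f nx r \<omega> = queried nx r \<omega> (stop_time f nx r \<omega>)"

text \<open>Joint space of auxiliary randomness and input.\<close>
definition Joint :: "((nat \<Rightarrow> bool) \<times> (nat \<Rightarrow> bool)) measure" where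
  "Joint = Cube \<Otimes>\<^sub>M Cube"

definition valid_algorithm :: "((nat \<Rightarrow> bool) \<Rightarrow> real) \<Rightarrow> algorithm \<Rightarrow> bool" where
  "valid_algorithm f nx \<longleftrightarrow>
     (\<forall>h. (\<lambda>r. nx r h) \<in> measurable Cube (count_space UNIV)) \<and>
     (AE p in Joint. \<exists>n. witness f (queried nx (fst p) (snd p) n) (snd p)) \<and>
     (\<forall>i. {p \<in> space Joint. i \<in> revealed f nx (fst p) (snd p)} \<in> sets Joint)"

definition revealment :: "((nat \<Rightarrow> bool) \<Rightarrow> real) \<Rightarrow> real" where
  "revealment f = (INF nx \<in> {nx. valid_algorithm f nx}.
      SUP i. measure Joint {p \<in> space Joint. i \<in> revealed f nx (fst p) (snd p)})"

end

theory Submission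
  imports Defs
begin

text \<open>Run a query algorithm on a uniform input together with its independent auxiliary randomness,
  and call \<open>S\<close> hit if \<open>S\<close> meets the set of revealed bits. Flipping a bit of \<open>S\<close> that is not
  revealed changes neither the run nor \<open>f\<close> but negates \<open>\<chi>\<^sub>S\<close>, so
  \<open>f\<^sup>(S) = E[f \<chi>\<^sub>S 1{S hit}]\<close>. For \<open>|S| = |S'|\<close>, \<open>S \<noteq> S'\<close>, the functions \<open>\<chi>\<^sub>S 1{S hit}\<close>
  and \<open>\<chi>\<^sub>S\<^sub>' 1{S' hit}\<close> are orthogonal: flipping the first unrevealed, or else the last revealed,
  element of \<open>S \<triangle> S'\<close> preserves both hit events and negates \<open>\<chi>\<^sub>S \<chi>\<^sub>S\<^sub>'\<close>. Hence for
  \<open>g = \<Sum> f\<^sup>(S) \<chi>\<^sub>S 1{S hit}\<close> over finitely many \<open>k\<close>-sets, with Fourier weight \<open>a\<close>,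
  \<open>a\<^sup>2 = E[f g]\<^sup>2 \<le> E[g\<^sup>2] = \<Sum> f\<^sup>(S)\<^sup>2 P(S hit) \<le> k \<delta> a\<close>, since a union bound gives
  \<open>P(S hit) \<le> |S| \<delta>\<close>.\<close>

lemma space_coin [simp]: "space coin = UNIV"
  by (simp add: coin_def)

lemma sets_coin [simp]: "sets coin = UNIV"
  by (simp add: coin_def)

lemma prob_space_coin: "prob_space coin"
  by (simp add: coin_def prob_space_measure_pmf)

lemma space_Cube [simp]: "space Cube = UNIV"
  by (simp add: Cube_def space_PiM)

lemma prob_space_Cube: "prob_space Cube"
  unfolding Cube_def by (rule prob_space_PiM) (simp add: prob_space_coin)

lemma space_Joint [simp]: "space Joint = UNIV"
  by (simp add: Joint_def space_pair_measure)

lemma prob_space_Joint: "prob_space Joint"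
  unfolding Joint_def by (intro prob_space_pair prob_space_Cube)

lemma measurable_into_coin_iff:
  fixes g :: "'a \<Rightarrow> bool"
  shows "g \<in> measurable M coin \<longleftrightarrow> g \<in> measurable M (count_space UNIV)"
  using measurable_cong_sets[of M M coin "count_space UNIV"] by simp

lemma measurable_coordinate_Cube [measurable]: "(\<lambda>\<omega>. \<omega> i) \<in> measurable Cube (count_space UNIV)"
  unfolding measurable_into_coin_iff[symmetric] Cube_def
  by (rule measurable_component_singleton) simp

lemma measurable_fst_Joint [measurable]: "fst \<in> measurable Joint Cube"
  by (simp add: Joint_def)

lemma measurable_snd_Joint [measurable]: "snd \<in> measurable Joint Cube"
  by (simp add: Joint_def)

lemma distr_snd_Joint: "distr Joint Cube snd = Cube"
proof (rule measure_eqI)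
  interpret Cube: prob_space Cube by (rule prob_space_Cube)
  fix A assume "A \<in> sets (distr Joint Cube snd)"
  then have A: "A \<in> sets Cube" by simp
  have "emeasure Joint (UNIV \<times> A) = emeasure Cube A"
    unfolding Joint_def using A Cube.emeasure_space_1 sets.top[of Cube]
    by (subst Cube.emeasure_pair_measure_Times) (auto simp: Cube.prob_space_axioms prob_space_imp_sigma_finite)
  moreover have "snd -` A \<inter> space Joint = UNIV \<times> A" by auto
  ultimately show "emeasure (distr Joint Cube snd) A = emeasure Cube A"
    using A by (simp add: emeasure_distr)
qed simp

lemma integral_snd_Joint:
  fixes g :: "(nat \<Rightarrow> bool) \<Rightarrow> real"
  assumes "g \<in> borel_measurable Cube"
  shows "(\<integral>p. g (snd p) \<partial>Joint) = (\<integral>\<omega>. g \<omega> \<partial>Cube)"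
  using integral_distr[OF measurable_snd_Joint assms] by (simp add: distr_snd_Joint)

lemma AE_snd_Joint:
  assumes "AE \<omega> in Cube. P \<omega>"
  shows "AE p in Joint. P (snd p)"
proof -
  have "AE \<omega> in distr Joint Cube snd. P \<omega>" using assms by (subst distr_snd_Joint)
  then show ?thesis by (rule AE_distrD[rotated]) simp
qed

lemma (in prob_space) integrable_bounded:
  fixes g :: "'a \<Rightarrow> real"
  assumes "g \<in> borel_measurable M" and "\<And>x. \<bar>g x\<bar> \<le> B"
  shows "integrable M g"
  using assms by (intro integrable_const_bound[of _ B]) auto

lemma (in prob_space) square_expectation_le:
  fixes g :: "'a \<Rightarrow> real"
  assumes "integrable M g" and "integrable M (\<lambda>x. (g x)\<^sup>2)"
  shows "(expectation g)\<^sup>2 \<le> expectation (\<lambda>x. (g x)\<^sup>2)"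
  using variance_positive[of g] variance_eq[OF assms] by simp

subsection \<open>Flipping one input bit\<close>

definition flip_bit :: "nat \<Rightarrow> (nat \<Rightarrow> bool) \<Rightarrow> (nat \<Rightarrow> bool)" where
  "flip_bit j \<omega> = fun_upd \<omega> j (\<not> \<omega> j)"

lemma flip_bit_flip_bit [simp]: "flip_bit j (flip_bit j \<omega>) = \<omega>"
  by (auto simp: flip_bit_def)

lemma measurable_flip_bit [measurable]: "flip_bit j \<in> measurable Cube Cube"
proof -
  have "(\<lambda>\<omega>. if i = j then \<not> \<omega> i else \<omega> i) \<in> measurable Cube coin" for i
    unfolding measurable_into_coin_iff by measurable
  moreover have "flip_bit j = (\<lambda>\<omega> i. if i = j then \<not> \<omega> i else \<omega> i)"
    by (auto simp: flip_bit_def fun_eq_iff)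
  ultimately show ?thesis
    by (subst (2) Cube_def) (auto intro: measurable_PiM_single')
qed

lemma distr_flip_bit_Cube: "distr Cube Cube (flip_bit j) = Cube"
proof -
  interpret product_prob_space "\<lambda>_. coin" UNIV
    by (rule product_prob_spaceI) (rule prob_space_coin)
  let ?P = "PiM UNIV (\<lambda>_. coin)"
  show ?thesis unfolding Cube_def
  proof (rule PiM_eq)
    fix J :: "nat set" and F :: "nat \<Rightarrow> bool set"
    assume J: "finite J" and F: "\<And>i. i \<in> J \<Longrightarrow> F i \<in> sets coin"
    define F' where "F' i = (if i = j then Not -` F i else F i)" for i
    have preimage: "flip_bit j -` prod_emb UNIV (\<lambda>_. coin) J (PiE J F) \<inter> space ?P
        = prod_emb UNIV (\<lambda>_. coin) J (PiE J F')"
      by (auto simp: prod_emb_def space_PiM F'_def flip_bit_def PiE_iff split: if_splits)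
    have same_prob: "emeasure coin (F' i) = emeasure coin (F i)" for i
    proof -
      have "card (Not -` F i) = card (F i)"
        by (rule bij_betw_same_card[of Not]) (auto simp: bij_betw_def inj_on_def)
      then show ?thesis by (auto simp: F'_def coin_def emeasure_pmf_of_set)
    qed
    have "emeasure (distr ?P ?P (flip_bit j)) (prod_emb UNIV (\<lambda>_. coin) J (PiE J F))
        = emeasure ?P (prod_emb UNIV (\<lambda>_. coin) J (PiE J F'))"
      using J F measurable_flip_bit[of j]
      by (subst emeasure_distr) (auto simp: Cube_def preimage intro!: sets_PiM_I)
    also have "\<dots> = (\<Prod>i\<in>J. emeasure coin (F i))"
      using J by (simp add: emeasure_PiM_emb same_prob)
    finally show "emeasure (distr ?P ?P (flip_bit j)) (prod_emb UNIV (\<lambda>_. coin) J (PiE J F))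
        = (\<Prod>i\<in>J. emeasure coin (F i))" .
  qed simp
qed

definition flip_input :: "nat \<Rightarrow> (nat \<Rightarrow> bool) \<times> (nat \<Rightarrow> bool) \<Rightarrow> (nat \<Rightarrow> bool) \<times> (nat \<Rightarrow> bool)" where
  "flip_input j p = (fst p, flip_bit j (snd p))"

lemma flip_input_flip_input [simp]: "flip_input j (flip_input j p) = p"
  by (simp add: flip_input_def)

lemma fst_flip_input [simp]: "fst (flip_input j p) = fst p"
  by (simp add: flip_input_def)

lemma snd_flip_input [simp]: "snd (flip_input j p) = flip_bit j (snd p)"
  by (simp add: flip_input_def)

lemma measurable_flip_input [measurable]: "flip_input j \<in> measurable Joint Joint"
  unfolding flip_input_def Joint_def
  by (intro measurable_Pair measurable_compose[OF measurable_snd measurable_flip_bit] measurable_fst)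

lemma distr_flip_input_Joint: "distr Joint Joint (flip_input j) = Joint"
proof -
  interpret Cube: prob_space Cube by (rule prob_space_Cube)
  have "distr Cube Cube id \<Otimes>\<^sub>M distr Cube Cube (flip_bit j)
      = distr (Cube \<Otimes>\<^sub>M Cube) (Cube \<Otimes>\<^sub>M Cube) (\<lambda>(x, y). (id x, flip_bit j y))"
    by (rule pair_measure_distr)
      (auto simp: distr_flip_bit_Cube Cube.prob_space_axioms prob_space_imp_sigma_finite)
  moreover have "(\<lambda>(x, y). (id x, flip_bit j y)) = flip_input j"
    by (auto simp: flip_input_def)
  moreover have "distr Cube Cube id = Cube"
    using distr_id[of Cube] by (simp add: id_def)
  ultimately show ?thesis by (simp add: distr_flip_bit_Cube Joint_def)
qed

lemma AE_flip_input:
  assumes "AE p in Joint. P p"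
  shows "AE p in Joint. P (flip_input j p)"
proof -
  have "AE p in distr Joint Joint (flip_input j). P p" using assms by (subst distr_flip_input_Joint)
  then show ?thesis by (rule AE_distrD[rotated]) simp
qed

lemma integral_flip_antisymmetric:
  fixes Z :: "_ \<Rightarrow> real"
  assumes [measurable]: "Z \<in> borel_measurable Joint" "A \<in> sets Joint"
    and invariant: "\<And>p. p \<in> A \<Longrightarrow> flip_input j p \<in> A"
    and antisymmetric: "AE p in Joint. p \<in> A \<longrightarrow> Z (flip_input j p) = - Z p"
  shows "(\<integral>p. indicator A p * Z p \<partial>Joint) = 0"
proof -
  have indicator_flip: "indicator A (flip_input j p) = (indicator A p :: real)" for p
    using invariant[of p] invariant[of "flip_input j p"] by (auto simp: indicator_def)
  have "(\<integral>p. indicator A p * Z p \<partial>Joint) = (\<integral>p. indicator A (flip_input j p) * Z (flip_input j p) \<partial>Joint)"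
    using integral_distr[of "flip_input j" Joint Joint "\<lambda>p. indicator A p * Z p"]
    by (simp add: distr_flip_input_Joint)
  also have "\<dots> = (\<integral>p. - (indicator A p * Z p) \<partial>Joint)"
    unfolding indicator_flip using antisymmetric
    by (intro integral_cong_AE) (auto simp: indicator_def elim: AE_mp)
  finally show ?thesis by simp
qed

lemma chi_flip_bit:
  assumes "finite S"
  shows "chi S (flip_bit j \<omega>) = (if j \<in> S then - chi S \<omega> else chi S \<omega>)"
proof -
  have rest: "(\<Prod>i\<in>S - {j}. sgnb (flip_bit j \<omega> i)) = (\<Prod>i\<in>S - {j}. sgnb (\<omega> i))"
    by (rule prod.cong) (auto simp: flip_bit_def)
  show ?thesis
  proof (cases "j \<in> S")
    case True
    then show ?thesis
      using assms rest by (simp add: chi_def prod.remove flip_bit_def sgnb_def)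
  next
    case False
    then show ?thesis by (auto simp: chi_def flip_bit_def intro!: prod.cong)
  qed
qed

lemma abs_chi [simp]: "\<bar>chi S \<omega>\<bar> = 1"
  unfolding chi_def abs_prod by (rule prod.neutral) (simp add: sgnb_def)

lemma chi_mult_self [simp]: "chi S \<omega> * chi S \<omega> = 1"
  using abs_chi[of S \<omega>] by (metis abs_mult_self_eq mult_1_left)

lemma borel_measurable_chi [measurable]: "chi S \<in> borel_measurable Cube"
  unfolding chi_def[abs_def] by measurable

subsection \<open>Histories of a query algorithm\<close>

lemma length_hist [simp]: "length (hist nx r \<omega> n) = n"
  by (induction n) (auto simp: Let_def)

lemma hist_Suc_append:
  "hist nx r \<omega> (Suc n) = hist nx r \<omega> n @ [(nx r (hist nx r \<omega> n), \<omega> (nx r (hist nx r \<omega> n)))]"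
  by (simp add: Let_def)

declare hist.simps(2) [simp del]

lemma hist_eq_take: "m \<le> n \<Longrightarrow> hist nx r \<omega> m = take m (hist nx r \<omega> n)"
proof (induction n)
  case (Suc n)
  then show ?case
    by (cases "m = Suc n") (simp_all add: hist_Suc_append le_Suc_eq)
qed simp

lemma queried_0 [simp]: "queried nx r \<omega> 0 = {}"
  by (simp add: queried_def)

lemma queried_Suc: "queried nx r \<omega> (Suc n) = insert (nx r (hist nx r \<omega> n)) (queried nx r \<omega> n)"
  by (auto simp: queried_def hist_Suc_append)

lemma queried_mono: "m \<le> n \<Longrightarrow> queried nx r \<omega> m \<subseteq> queried nx r \<omega> n"
  by (induction n) (auto simp: queried_Suc le_Suc_eq)

lemma hist_snd_eq: "(i, b) \<in> set (hist nx r \<omega> n) \<Longrightarrow> b = \<omega> i"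
  by (induction n) (auto simp: hist_Suc_append)

lemma hist_flip_bit:
  assumes "j \<notin> queried nx r \<omega> n" and "m \<le> n"
  shows "hist nx r (flip_bit j \<omega>) m = hist nx r \<omega> m"
  using assms(2)
proof (induction m)
  case (Suc m)
  then have "nx r (hist nx r \<omega> m) \<in> queried nx r \<omega> n"
    using queried_mono[of "Suc m" n nx r \<omega>] by (auto simp: queried_Suc)
  then have "nx r (hist nx r \<omega> m) \<noteq> j" using assms(1) by auto
  then show ?case using Suc by (simp add: hist_Suc_append flip_bit_def)
qed simp

lemma measurable_hist:
  assumes "\<And>h. (\<lambda>r. nx r h) \<in> measurable Cube (count_space UNIV)"
  shows "(\<lambda>p. hist nx (fst p) (snd p) n) \<in> measurable Joint (count_space UNIV)"
proof (induction n)
  case (Suc n)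
  have next_index: "(\<lambda>p. nx (fst p) h) \<in> measurable Joint (count_space UNIV)" for h
    by (rule measurable_compose[OF measurable_fst_Joint assms])
  have query: "(\<lambda>p. h @ [(i, snd p i)]) \<in> measurable Joint (count_space UNIV)" for h i
    by (rule measurable_compose[OF measurable_snd_Joint]) simp
  have extend: "(\<lambda>p. h @ [(nx (fst p) h, snd p (nx (fst p) h))]) \<in> measurable Joint (count_space UNIV)" for h
    by (rule measurable_compose_countable'[OF query next_index]) simp
  have "(\<lambda>p. (\<lambda>h p. h @ [(nx (fst p) h, snd p (nx (fst p) h))]) (hist nx (fst p) (snd p) n) p)
      \<in> measurable Joint (count_space UNIV)"
    by (rule measurable_compose_countable'[OF extend Suc]) simp
  then show ?case by (simp add: hist_Suc_append)
qed simp

lemma witness_mono: "witness f W \<omega> \<Longrightarrow> W \<subseteq> W' \<Longrightarrow> witness f W' \<omega>"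
  unfolding witness_def by (meson subsetD)

lemma witness_iff_null:
  assumes "boolean_function f" and "finite W"
  shows "witness f W \<omega> \<longleftrightarrow> measure Cube {\<omega>'. (\<forall>i\<in>W. \<omega>' i = \<omega> i) \<and> f \<omega>' \<noteq> f \<omega>} = 0"
proof -
  interpret Cube: prob_space Cube by (rule prob_space_Cube)
  have [measurable]: "f \<in> borel_measurable Cube"
    using assms(1) by (simp add: boolean_function_def)
  define X where "X = {\<omega>'. (\<forall>i\<in>W. \<omega>' i = \<omega> i) \<and> f \<omega>' \<noteq> f \<omega>}"
  have X: "X \<in> sets Cube"
  proof -
    have "{\<omega>'\<in>space Cube. (\<forall>i\<in>W. \<omega>' i = \<omega> i) \<and> f \<omega>' \<noteq> f \<omega>} \<in> sets Cube"
      using assms(2) by measurable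
    then show ?thesis by (simp add: X_def)
  qed
  show ?thesis unfolding X_def[symmetric]
  proof
    assume "witness f W \<omega>"
    then obtain A where A: "A \<in> sets Cube" "measure Cube A = 1"
      and "\<forall>\<omega>'\<in>A. (\<forall>i\<in>W. \<omega>' i = \<omega> i) \<longrightarrow> f \<omega>' = f \<omega>"
      unfolding witness_def by blast
    then have "X \<subseteq> space Cube - A" by (auto simp: X_def)
    then have "measure Cube X \<le> measure Cube (space Cube - A)"
      using A X sets.compl_sets[of A Cube] by (intro Cube.finite_measure_mono) auto
    also have "\<dots> = 0" using A Cube.prob_compl[of A] by simp
    finally show "measure Cube X = 0" using measure_nonneg[of Cube X] by linarith
  next
    assume "measure Cube X = 0"
    then show "witness f W \<omega>"
      unfolding witness_def using X Cube.prob_compl[OF X] sets.compl_sets[of X Cube]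
      by (intro bexI[of _ "space Cube - X"]) (auto simp: X_def)
  qed
qed

lemma sets_witness:
  assumes "boolean_function f" and "finite W"
  shows "{\<omega>. witness f W \<omega>} \<in> sets Cube"
proof -
  have [measurable]: "f \<in> borel_measurable Cube"
    using assms(1) by (simp add: boolean_function_def)
  define null where "null \<sigma> v \<longleftrightarrow> measure Cube {\<omega>'. (\<forall>i\<in>W. \<omega>' i = \<sigma> i) \<and> f \<omega>' \<noteq> v} = 0"
    for \<sigma> :: "nat \<Rightarrow> bool" and v :: real
  define block where "block \<sigma> v = {\<omega> \<in> space Cube. (\<forall>i\<in>W. \<omega> i = \<sigma> i) \<and> f \<omega> = v}" for \<sigma> v
  have "{\<omega>. witness f W \<omega>} = (\<Union>\<sigma>\<in>PiE W (\<lambda>_. UNIV). \<Union>v\<in>{-1, 1}. if null \<sigma> v then block \<sigma> v else {})"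
  proof (intro set_eqI iffI)
    fix \<omega> assume "\<omega> \<in> {\<omega>. witness f W \<omega>}"
    moreover have "f \<omega> \<in> {-1, 1}" using assms(1) by (auto simp: boolean_function_def)
    ultimately show "\<omega> \<in> (\<Union>\<sigma>\<in>PiE W (\<lambda>_. UNIV). \<Union>v\<in>{-1, 1}. if null \<sigma> v then block \<sigma> v else {})"
      using witness_iff_null[OF assms, of \<omega>]
      by (intro UN_I[of "restrict \<omega> W"]) (auto simp: null_def block_def)
  next
    fix \<omega> assume "\<omega> \<in> (\<Union>\<sigma>\<in>PiE W (\<lambda>_. UNIV). \<Union>v\<in>{-1, 1}. if null \<sigma> v then block \<sigma> v else {})"
    then obtain \<sigma> where "null \<sigma> (f \<omega>)" "\<forall>i\<in>W. \<omega> i = \<sigma> i"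
      by (auto simp: block_def split: if_splits)
    then show "\<omega> \<in> {\<omega>. witness f W \<omega>}"
      using witness_iff_null[OF assms, of \<omega>] by (simp add: null_def)
  qed
  moreover have "block \<sigma> v \<in> sets Cube" for \<sigma> v
    unfolding block_def using assms(2) by measurable
  then have "(\<Union>\<sigma>\<in>PiE W (\<lambda>_. UNIV). \<Union>v\<in>{-1, 1}. if null \<sigma> v then block \<sigma> v else {}) \<in> sets Cube"
    using assms(2) by (intro sets.finite_UN) (auto simp: finite_PiE)
  ultimately show ?thesis by simp
qed

lemma boolean_function_abs:
  assumes "boolean_function f"
  shows "\<bar>f \<omega>\<bar> = 1"
proof -
  have "f \<omega> = -1 \<or> f \<omega> = 1" using assms by (simp add: boolean_function_def)
  then show ?thesis by auto
qed

lemma boolean_function_squared: "boolean_function f \<Longrightarrow> (f \<omega>)\<^sup>2 = 1"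
  using boolean_function_abs by (metis abs_power2 one_power2 power2_abs)

subsection \<open>The revealed set of a query algorithm\<close>

definition cylinder :: "(nat \<times> bool) list \<Rightarrow> (nat \<Rightarrow> bool) \<Rightarrow> bool" where
  "cylinder h \<omega> \<longleftrightarrow> (\<forall>(i, b)\<in>set h. \<omega> i = b)"

locale query_algorithm =
  fixes f :: "(nat \<Rightarrow> bool) \<Rightarrow> real" and nx :: algorithm
  assumes boolean_function: "boolean_function f"
    and measurable_next_index: "\<And>h. (\<lambda>r. nx r h) \<in> measurable Cube (count_space UNIV)"
begin

abbreviation history :: "nat \<Rightarrow> (nat \<Rightarrow> bool) \<times> (nat \<Rightarrow> bool) \<Rightarrow> (nat \<times> bool) list" where
  "history n p \<equiv> hist nx (fst p) (snd p) n"

abbreviation seen :: "nat \<Rightarrow> (nat \<Rightarrow> bool) \<times> (nat \<Rightarrow> bool) \<Rightarrow> nat set" where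
  "seen n p \<equiv> queried nx (fst p) (snd p) n"

text \<open>The stopping rule behind \<open>revealed\<close> compares with the value of \<open>f\<close> at the input itself,
  which is not a function of the history. Stopping instead once \<open>f\<close> is almost surely constant on
  the cylinder of the history gives a rule that only looks at the history, hence behaves well
  under measurability and bit flips; the two rules agree on \<open>consistent\<close> runs, i.e.\ almost
  surely.\<close>

definition determined :: "(nat \<times> bool) list \<Rightarrow> bool" where
  "determined h \<longleftrightarrow> (\<exists>v. measure Cube {\<omega>. cylinder h \<omega> \<and> f \<omega> \<noteq> v} = 0)"

definition determined_value :: "(nat \<times> bool) list \<Rightarrow> real" where
  "determined_value h = (SOME v. measure Cube {\<omega>. cylinder h \<omega> \<and> f \<omega> \<noteq> v} = 0)"

definition running :: "nat \<Rightarrow> (nat \<Rightarrow> bool) \<times> (nat \<Rightarrow> bool) \<Rightarrow> bool" where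
  "running n p \<longleftrightarrow> (\<forall>m<n. \<not> determined (history m p))"

definition revealed_set :: "(nat \<Rightarrow> bool) \<times> (nat \<Rightarrow> bool) \<Rightarrow> nat set" where
  "revealed_set p = {i. \<exists>n. running n p \<and> i \<in> seen n p}"

definition consistent :: "(nat \<Rightarrow> bool) \<times> (nat \<Rightarrow> bool) \<Rightarrow> bool" where
  "consistent p \<longleftrightarrow> (\<exists>n. determined (history n p)) \<and>
     (\<forall>n. determined (history n p) \<longrightarrow> f (snd p) = determined_value (history n p))"

lemma borel_measurable_f [measurable]: "f \<in> borel_measurable Cube"
  using boolean_function by (simp add: boolean_function_def)

lemmas abs_f [simp] = boolean_function_abs[OF boolean_function]
  and f_squared [simp] = boolean_function_squared[OF boolean_function]

lemma sets_history_pred: "{p. R (history n p)} \<in> sets Joint"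
proof -
  have "(\<lambda>p. R (history n p)) \<in> measurable Joint (count_space UNIV)"
    by (rule measurable_compose[OF measurable_hist[OF measurable_next_index]]) simp
  then have "{p \<in> space Joint. R (history n p)} \<in> sets Joint" by measurable
  then show ?thesis by simp
qed

lemma cylinder_history: "cylinder (history n p) \<omega> \<longleftrightarrow> (\<forall>i\<in>seen n p. \<omega> i = snd p i)"
  unfolding cylinder_def queried_def using hist_snd_eq[of _ _ nx "fst p" "snd p" n] by fastforce

lemma witness_seen_iff:
  "witness f (seen n p) (snd p) \<longleftrightarrow> measure Cube {\<omega>. cylinder (history n p) \<omega> \<and> f \<omega> \<noteq> f (snd p)} = 0"
  unfolding cylinder_history by (rule witness_iff_null[OF boolean_function]) (simp add: queried_def)

lemma determined_if_witness: "witness f (seen n p) (snd p) \<Longrightarrow> determined (history n p)"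
  unfolding witness_seen_iff determined_def by blast

lemma determined_value: "determined h \<Longrightarrow> measure Cube {\<omega>. cylinder h \<omega> \<and> f \<omega> \<noteq> determined_value h} = 0"
  unfolding determined_def determined_value_def by (rule someI_ex)

lemma witness_iff_determined:
  assumes "consistent p"
  shows "witness f (seen n p) (snd p) \<longleftrightarrow> determined (history n p)"
proof
  assume "determined (history n p)"
  moreover from this have "f (snd p) = determined_value (history n p)"
    using assms unfolding consistent_def by blast
  ultimately show "witness f (seen n p) (snd p)"
    unfolding witness_seen_iff using determined_value by simp
qed (rule determined_if_witness)

lemma running_iff_prefixes: "running n p \<longleftrightarrow> (\<forall>m<n. \<not> determined (take m (history n p)))"
proof -
  have "m < n \<Longrightarrow> history m p = take m (history n p)" for m
    by (simp add: hist_eq_take)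
  then show ?thesis unfolding running_def by auto
qed

lemma sets_running: "{p. running n p} \<in> sets Joint"
  unfolding running_iff_prefixes by (rule sets_history_pred)

lemma sets_revealed_set: "{p. i \<in> revealed_set p} \<in> sets Joint"
proof -
  have "{p. i \<in> revealed_set p} = (\<Union>n. {p. running n p} \<inter> {p. i \<in> fst ` set (history n p)})"
    by (auto simp: revealed_set_def queried_def)
  then show ?thesis using sets_running sets_history_pred by auto
qed

lemma running_mono: "running n p \<Longrightarrow> m \<le> n \<Longrightarrow> running m p"
  by (auto simp: running_def)

lemma running_Suc: "running (Suc n) p \<longleftrightarrow> running n p \<and> \<not> determined (history n p)"
  by (auto simp: running_def less_Suc_eq)

lemma history_flip_input: "j \<notin> seen n p \<Longrightarrow> m \<le> n \<Longrightarrow> history m (flip_input j p) = history m p"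
  by (simp add: hist_flip_bit)

lemma not_seen_if_unrevealed: "j \<notin> revealed_set p \<Longrightarrow> running n p \<Longrightarrow> j \<notin> seen n p"
  by (auto simp: revealed_set_def)

lemma running_flip_unrevealed:
  assumes "j \<notin> revealed_set p"
  shows "running n (flip_input j p) \<longleftrightarrow> running n p"
proof (induction n)
  case (Suc n)
  show ?case
  proof (cases "running n p")
    case True
    then have "history n (flip_input j p) = history n p"
      using history_flip_input[OF not_seen_if_unrevealed[OF assms True]] by simp
    then show ?thesis using Suc True by (simp add: running_Suc)
  qed (use Suc in \<open>simp add: running_Suc\<close>)
qed (simp add: running_def)

lemma revealed_set_flip_unrevealed:
  assumes "j \<notin> revealed_set p"
  shows "revealed_set (flip_input j p) = revealed_set p"
proof -
  have "seen n (flip_input j p) = seen n p" if "running n p" for n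
    using history_flip_input[OF not_seen_if_unrevealed[OF assms that], of n]
    by (simp add: queried_def)
  then show ?thesis
    unfolding revealed_set_def using running_flip_unrevealed[OF assms] by auto
qed

lemma first_determined:
  assumes "\<exists>n. determined (history n p)"
  obtains n where "determined (history n p)" and "\<And>m. running m p \<longleftrightarrow> m \<le> n"
proof
  let ?n = "LEAST n. determined (history n p)"
  show "determined (history ?n p)" using assms by (rule LeastI_ex)
  then show "running m p \<longleftrightarrow> m \<le> ?n" for m
    unfolding running_def by (meson Least_le not_less_Least order.strict_trans2 not_le)
qed

lemma f_flip_unrevealed:
  assumes "consistent p" and "consistent (flip_input j p)" and "j \<notin> revealed_set p"
  shows "f (flip_bit j (snd p)) = f (snd p)"
proof -
  obtain n where n: "determined (history n p)" "running n p"
    using assms(1) unfolding consistent_def by (metis first_determined order_refl)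
  have "history n (flip_input j p) = history n p"
    using history_flip_input[OF not_seen_if_unrevealed[OF assms(3) n(2)]] by simp
  then show ?thesis
    using assms(1,2) n(1) unfolding consistent_def by (metis snd_flip_input)
qed

lemma revealed_eq_revealed_set:
  assumes "consistent p"
  shows "revealed f nx (fst p) (snd p) = revealed_set p"
proof -
  obtain n where n: "determined (history n p)" and running: "\<And>m. running m p \<longleftrightarrow> m \<le> n"
    using assms unfolding consistent_def by (metis first_determined)
  have "stop_time f nx (fst p) (snd p) = n"
    unfolding stop_time_def witness_iff_determined[OF assms]
    using n running[of n] unfolding running_def by (intro Least_equality) (auto intro: leI)
  moreover have "revealed_set p = seen n p"
    unfolding revealed_set_def running using queried_mono[of _ n] by blast
  ultimately show ?thesis by (simp add: revealed_def)
qed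

definition hit :: "nat set \<Rightarrow> ((nat \<Rightarrow> bool) \<times> (nat \<Rightarrow> bool)) set" where
  "hit S = {p. S \<inter> revealed_set p \<noteq> {}}"

lemma sets_hit: "finite S \<Longrightarrow> hit S \<in> sets Joint"
proof -
  assume "finite S"
  moreover have "hit S = (\<Union>i\<in>S. {p. i \<in> revealed_set p})" by (auto simp: hit_def)
  ultimately show ?thesis using sets_revealed_set by auto
qed

lemma indicator_hit_flip_unrevealed:
  "j \<notin> revealed_set p \<Longrightarrow> indicator (hit S) (flip_input j p) = indicator (hit S) p"
  by (simp add: hit_def revealed_set_flip_unrevealed indicator_def)

subsection \<open>Partition by the first unrevealed or the last revealed element\<close>

definition first_unrevealed :: "nat set \<Rightarrow> nat \<Rightarrow> ((nat \<Rightarrow> bool) \<times> (nat \<Rightarrow> bool)) set" where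
  "first_unrevealed D j = {p. j \<notin> revealed_set p \<and> (\<forall>i\<in>D. i < j \<longrightarrow> i \<in> revealed_set p)}"

definition last_revealed :: "nat set \<Rightarrow> nat \<Rightarrow> ((nat \<Rightarrow> bool) \<times> (nat \<Rightarrow> bool)) set" where
  "last_revealed D l = {p. \<exists>n. D - {l} \<subseteq> seen n p \<and> l \<notin> seen n p \<and>
     nx (fst p) (history n p) = l \<and> running (Suc n) p}"

lemma sets_first_unrevealed: "finite D \<Longrightarrow> first_unrevealed D j \<in> sets Joint"
proof -
  assume "finite D"
  have unrevealed: "{p. i \<notin> revealed_set p} \<in> sets Joint" for i
    using sets.compl_sets[OF sets_revealed_set[of i]] by (simp add: set_diff_eq)
  have "first_unrevealed D j = {p. j \<notin> revealed_set p} - (\<Union>i\<in>{i\<in>D. i < j}. {p. i \<notin> revealed_set p})"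
    by (auto simp: first_unrevealed_def)
  then show ?thesis using \<open>finite D\<close> unrevealed by auto
qed

lemma sets_last_revealed: "last_revealed D l \<in> sets Joint"
proof -
  define R where "R n h \<longleftrightarrow> D - {l} \<subseteq> fst ` set (take n h) \<and> l \<notin> fst ` set (take n h) \<and>
     fst (last h) = l \<and> (\<forall>m<Suc n. \<not> determined (take m h))" for n h
  have "p \<in> last_revealed D l \<longleftrightarrow> (\<exists>n. R n (history (Suc n) p))" for p
    unfolding last_revealed_def R_def running_iff_prefixes
    by (simp add: hist_Suc_append queried_def)
  then have "last_revealed D l = (\<Union>n. {p. R n (history (Suc n) p)})" by auto
  then show ?thesis using sets_history_pred by auto
qed

lemma first_unrevealed_flip: "p \<in> first_unrevealed D j \<Longrightarrow> flip_input j p \<in> first_unrevealed D j"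
  by (simp add: first_unrevealed_def revealed_set_flip_unrevealed)

lemma subset_revealed_if_last_revealed: "p \<in> last_revealed D l \<Longrightarrow> D \<subseteq> revealed_set p"
proof -
  assume "p \<in> last_revealed D l"
  then obtain n where n: "D - {l} \<subseteq> seen n p" "nx (fst p) (history n p) = l" "running (Suc n) p"
    by (auto simp: last_revealed_def)
  then have "D \<subseteq> seen (Suc n) p" by (auto simp: queried_Suc)
  then show ?thesis using n(3) by (auto simp: revealed_set_def)
qed

text \<open>The history before \<open>l\<close> is queried does not depend on the bit \<open>l\<close>.\<close>

lemma last_revealed_flip: "p \<in> last_revealed D l \<Longrightarrow> flip_input l p \<in> last_revealed D l"
proof -
  assume "p \<in> last_revealed D l"
  then obtain n where n: "D - {l} \<subseteq> seen n p" "l \<notin> seen n p" "nx (fst p) (history n p) = l"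
    "running (Suc n) p"
    by (auto simp: last_revealed_def)
  have same: "m \<le> n \<Longrightarrow> history m (flip_input l p) = history m p" for m
    by (rule history_flip_input[OF n(2)])
  then have "seen n (flip_input l p) = seen n p" by (simp add: queried_def)
  moreover have "running (Suc n) (flip_input l p)"
    using n(4) same by (simp add: running_def less_Suc_eq_le)
  ultimately show ?thesis
    unfolding last_revealed_def using n same[of n] by (intro CollectI exI[of _ n]) auto
qed

lemma running_seen_if_subset_revealed:
  assumes "finite D" and "D \<subseteq> revealed_set p"
  shows "\<exists>n. running n p \<and> D \<subseteq> seen n p"
  using assms
proof (induction D rule: finite_induct)
  case empty
  then show ?case by (auto simp: running_def)
next
  case (insert i D)
  then obtain n where n: "running n p" "D \<subseteq> seen n p" by auto
  obtain n' where n': "running n' p" "i \<in> seen n' p"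
    using insert.prems by (auto simp: revealed_set_def)
  have "running (max n n') p" using n(1) n'(1) by (simp add: max_def)
  moreover have "seen n p \<subseteq> seen (max n n') p" "seen n' p \<subseteq> seen (max n n') p"
    by (simp_all add: queried_mono)
  ultimately show ?case using n(2) n'(2) by blast
qed

lemma last_revealed_exists:
  assumes "finite D" and "D \<noteq> {}" and "D \<subseteq> revealed_set p"
  shows "\<exists>l\<in>D. p \<in> last_revealed D l"
proof -
  obtain N where N: "running N p" "D \<subseteq> seen N p"
    using running_seen_if_subset_revealed[OF assms(1,3)] by blast
  define n' where "n' = (LEAST n. D \<subseteq> seen n p)"
  have covered: "D \<subseteq> seen n' p"
    unfolding n'_def using N(2) by (rule LeastI)
  have "n' \<le> N"
    unfolding n'_def using N(2) by (rule Least_le)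
  then have running: "running n' p" using N(1) by (rule running_mono[rotated])
  have "n' \<noteq> 0" using covered assms(2) by auto
  then obtain n where n: "n' = Suc n" using not0_implies_Suc by blast
  then have not_covered: "\<not> D \<subseteq> seen n p"
    using not_less_Least[of n "\<lambda>n. D \<subseteq> seen n p"] unfolding n'_def by auto
  define l where "l = nx (fst p) (history n p)"
  have "seen (Suc n) p = insert l (seen n p)" by (simp add: l_def queried_Suc)
  then have "l \<in> D" "l \<notin> seen n p" "D - {l} \<subseteq> seen n p"
    using covered not_covered n by auto
  then show ?thesis using running n l_def by (auto simp: last_revealed_def)
qed

lemma last_revealed_unique:
  assumes "p \<in> last_revealed D l" "p \<in> last_revealed D l'" "l \<in> D" "l' \<in> D"
  shows "l = l'"
proof (rule ccontr)
  assume "l \<noteq> l'"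
  obtain n where n: "D - {l} \<subseteq> seen n p" "l \<notin> seen n p"
    using assms(1) by (auto simp: last_revealed_def)
  obtain n' where n': "D - {l'} \<subseteq> seen n' p" "l' \<notin> seen n' p"
    using assms(2) by (auto simp: last_revealed_def)
  have "l' \<in> seen n p" "l \<in> seen n' p"
    using n(1) n'(1) \<open>l \<noteq> l'\<close> assms(3,4) by auto
  moreover have "seen n p \<subseteq> seen n' p \<or> seen n' p \<subseteq> seen n p"
    by (cases "n \<le> n'") (simp_all add: queried_mono)
  ultimately show False using n(2) n'(2) by blast
qed

lemma first_unrevealed_exists:
  assumes "finite D" and "\<not> D \<subseteq> revealed_set p"
  shows "\<exists>j\<in>D. p \<in> first_unrevealed D j"
proof -
  let ?U = "{j\<in>D. j \<notin> revealed_set p}"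
  have U: "finite ?U" "?U \<noteq> {}" using assms by auto
  then have "Min ?U \<in> ?U" by (rule Min_in)
  moreover have "i \<in> revealed_set p" if "i \<in> D" "i < Min ?U" for i
  proof (rule ccontr)
    assume "i \<notin> revealed_set p"
    then have "Min ?U \<le> i" using that(1) by (intro Min_le U(1)) simp
    then show False using that(2) by simp
  qed
  ultimately show ?thesis by (auto simp: first_unrevealed_def)
qed

lemma first_unrevealed_unique:
  assumes "p \<in> first_unrevealed D j" "p \<in> first_unrevealed D j'" "j \<in> D" "j' \<in> D"
  shows "j = j'"
proof -
  have "\<not> j < j'" "\<not> j' < j"
    using assms unfolding first_unrevealed_def by auto
  then show ?thesis by simp
qed

lemma sum_indicator_eq_1_if_unique:
  assumes "finite D" "l \<in> D" "p \<in> E l" "\<And>l'. l' \<in> D \<Longrightarrow> p \<in> E l' \<Longrightarrow> l' = l"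
  shows "(\<Sum>l'\<in>D. indicator (E l') p) = (1::real)"
proof -
  have "indicator (E l') p = (if l' = l then 1 else 0 :: real)" if "l' \<in> D" for l'
  proof (cases "l' = l")
    case False
    then have "p \<notin> E l'" using assms(4)[OF that] by blast
    then show ?thesis using False by simp
  qed (use assms(3) in simp)
  then have "(\<Sum>l'\<in>D. indicator (E l') p) = (\<Sum>l'\<in>D. if l' = l then 1 else 0 :: real)"
    by (rule sum.cong[OF refl])
  then show ?thesis using assms(1,2) by simp
qed

lemma first_unrevealed_last_revealed_partition:
  assumes "finite D" and "D \<noteq> {}"
  shows "(\<Sum>j\<in>D. indicator (first_unrevealed D j) p) + (\<Sum>l\<in>D. indicator (last_revealed D l) p) = (1::real)"
proof (cases "D \<subseteq> revealed_set p")
  case True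
  then have "(\<Sum>j\<in>D. indicator (first_unrevealed D j) p) = (0::real)"
    by (intro sum.neutral) (auto simp: first_unrevealed_def)
  moreover obtain l where l: "l \<in> D" "p \<in> last_revealed D l"
    using last_revealed_exists[OF assms True] by blast
  then have "(\<Sum>l\<in>D. indicator (last_revealed D l) p) = (1::real)"
    using l last_revealed_unique
    by (intro sum_indicator_eq_1_if_unique[where E = "last_revealed D", OF assms(1) l]) metis
  ultimately show ?thesis by simp
next
  case False
  then have "p \<notin> last_revealed D l" for l
    using subset_revealed_if_last_revealed by blast
  then have "(\<Sum>l\<in>D. indicator (last_revealed D l) p) = (0::real)" by simp
  moreover obtain j where j: "j \<in> D" "p \<in> first_unrevealed D j"
    using first_unrevealed_exists[OF assms(1) False] by blast
  then have "(\<Sum>j\<in>D. indicator (first_unrevealed D j) p) = (1::real)"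
    using j first_unrevealed_unique
    by (intro sum_indicator_eq_1_if_unique[where E = "first_unrevealed D", OF assms(1) j]) metis
  ultimately show ?thesis by simp
qed

lemma integral_chi_hit_orthogonal:
  assumes S: "finite S" "finite S'" "S \<noteq> S'" "card S = card S'"
  shows "(\<integral>p. chi S (snd p) * chi S' (snd p) * (indicator (hit S) p * indicator (hit S') p) \<partial>Joint) = 0"
proof -
  interpret Joint: prob_space Joint by (rule prob_space_Joint)
  define D where "D = (S - S') \<union> (S' - S)"
  define Z where "Z p = chi S (snd p) * chi S' (snd p) * (indicator (hit S) p * indicator (hit S') p)" for p
  have D: "finite D" "D \<noteq> {}" using S by (auto simp: D_def)
  have "\<not> S \<subseteq> S'" "\<not> S' \<subseteq> S" using S card_subset_eq by metis+
  then have hits: "q \<in> hit S" "q \<in> hit S'" if "D \<subseteq> revealed_set q" for q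
    using that by (auto simp: D_def hit_def)
  have [measurable]: "Z \<in> borel_measurable Joint"
    unfolding Z_def[abs_def] using sets_hit[OF S(1)] sets_hit[OF S(2)] by measurable
  have integrable: "integrable Joint (\<lambda>p. indicator A p * Z p)" if "A \<in> sets Joint" for A
  proof (rule Joint.integrable_bounded)
    show "(\<lambda>p. indicator A p * Z p) \<in> borel_measurable Joint" using that by measurable
    show "\<bar>indicator A p * Z p\<bar> \<le> 1" for p by (simp add: Z_def indicator_def abs_mult)
  qed
  have chi_flip: "chi S (flip_bit j \<omega>) * chi S' (flip_bit j \<omega>) = - (chi S \<omega> * chi S' \<omega>)" if "j \<in> D" for j \<omega>
    using that S(1,2) by (auto simp: chi_flip_bit D_def)
  have first: "(\<integral>p. indicator (first_unrevealed D j) p * Z p \<partial>Joint) = 0" if "j \<in> D" for j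
  proof (rule integral_flip_antisymmetric[where j = j])
    show "AE p in Joint. p \<in> first_unrevealed D j \<longrightarrow> Z (flip_input j p) = - Z p"
    proof (rule AE_I2, rule impI)
      fix p assume "p \<in> first_unrevealed D j"
      then have "j \<notin> revealed_set p" by (simp add: first_unrevealed_def)
      then show "Z (flip_input j p) = - Z p"
        using chi_flip[OF that, of "snd p"] by (simp add: Z_def indicator_hit_flip_unrevealed)
    qed
  qed (simp_all add: sets_first_unrevealed D(1) first_unrevealed_flip)
  have last: "(\<integral>p. indicator (last_revealed D l) p * Z p \<partial>Joint) = 0" if "l \<in> D" for l
  proof (rule integral_flip_antisymmetric[where j = l])
    show "AE p in Joint. p \<in> last_revealed D l \<longrightarrow> Z (flip_input l p) = - Z p"
    proof (rule AE_I2, rule impI)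
      fix p assume p: "p \<in> last_revealed D l"
      note hits[OF subset_revealed_if_last_revealed[OF p]]
        hits[OF subset_revealed_if_last_revealed[OF last_revealed_flip[OF p]]]
      then show "Z (flip_input l p) = - Z p"
        using chi_flip[OF that, of "snd p"] by (simp add: Z_def)
    qed
  qed (simp_all add: sets_last_revealed last_revealed_flip)
  have "(\<integral>p. Z p \<partial>Joint)
      = (\<integral>p. (\<Sum>j\<in>D. indicator (first_unrevealed D j) p * Z p) + (\<Sum>l\<in>D. indicator (last_revealed D l) p * Z p) \<partial>Joint)"
    using first_unrevealed_last_revealed_partition[OF D]
    by (simp flip: sum_distrib_right distrib_right)
  also have "\<dots> = (\<Sum>j\<in>D. \<integral>p. indicator (first_unrevealed D j) p * Z p \<partial>Joint)
      + (\<Sum>l\<in>D. \<integral>p. indicator (last_revealed D l) p * Z p \<partial>Joint)"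
    using integrable sets_first_unrevealed[OF D(1)] sets_last_revealed
    by (simp add: integrable_sum)
  also have "\<dots> = 0" using first last by simp
  finally show ?thesis unfolding Z_def .
qed

end

subsection \<open>Fourier weight on a level and revealment\<close>

definition algorithm_revealment :: "((nat \<Rightarrow> bool) \<Rightarrow> real) \<Rightarrow> algorithm \<Rightarrow> real" where
  "algorithm_revealment f nx =
     (SUP i. measure Joint {p \<in> space Joint. i \<in> revealed f nx (fst p) (snd p)})"

locale valid_query_algorithm = query_algorithm +
  assumes valid_algorithm: "valid_algorithm f nx"
begin

lemma AE_eq_determined_value: "AE \<omega> in Cube. determined h \<longrightarrow> cylinder h \<omega> \<longrightarrow> f \<omega> = determined_value h"
proof (cases "determined h")
  case True
  interpret Cube: prob_space Cube by (rule prob_space_Cube)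
  define N where "N = {\<omega>. cylinder h \<omega> \<and> f \<omega> \<noteq> determined_value h}"
  have "N = {\<omega> \<in> space Cube. (\<forall>x\<in>set h. \<omega> (fst x) = snd x) \<and> f \<omega> \<noteq> determined_value h}"
    by (auto simp: N_def cylinder_def)
  also have "\<dots> \<in> sets Cube" by measurable
  finally have "N \<in> null_sets Cube"
    using determined_value[OF True] by (simp add: null_sets_def N_def Cube.emeasure_eq_measure)
  then show ?thesis by (rule AE_I') (auto simp: N_def)
qed simp

lemma AE_consistent: "AE p in Joint. consistent p"
proof -
  have "AE p in Joint. \<forall>h. determined h \<longrightarrow> cylinder h (snd p) \<longrightarrow> f (snd p) = determined_value h"
    using AE_snd_Joint[OF AE_eq_determined_value] by (subst AE_all_countable) simp
  moreover have "AE p in Joint. \<exists>n. witness f (seen n p) (snd p)"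
    using valid_algorithm by (simp add: valid_algorithm_def)
  ultimately show ?thesis
  proof eventually_elim
    case (elim p)
    then show ?case
      unfolding consistent_def using determined_if_witness cylinder_history by blast
  qed
qed

lemma measure_revealed_set_le: "measure Joint {p. i \<in> revealed_set p} \<le> algorithm_revealment f nx"
proof -
  interpret Joint: prob_space Joint by (rule prob_space_Joint)
  have "measure Joint {p. i \<in> revealed_set p}
      = measure Joint {p \<in> space Joint. i \<in> revealed f nx (fst p) (snd p)}"
  proof (rule measure_eq_AE)
    show "AE p in Joint. p \<in> {p. i \<in> revealed_set p} \<longleftrightarrow> p \<in> {p \<in> space Joint. i \<in> revealed f nx (fst p) (snd p)}"
      using AE_consistent by eventually_elim (simp add: revealed_eq_revealed_set)
  qed (use sets_revealed_set valid_algorithm in \<open>auto simp: valid_algorithm_def\<close>)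
  also have "\<dots> \<le> algorithm_revealment f nx"
    unfolding algorithm_revealment_def
    by (rule cSUP_upper) (auto intro!: bdd_aboveI[of _ 1] Joint.prob_le_1)
  finally show ?thesis .
qed

lemma algorithm_revealment_nonneg: "0 \<le> algorithm_revealment f nx"
  using measure_revealed_set_le[of 0] measure_nonneg[of Joint "{p. 0 \<in> revealed_set p}"] by linarith

lemma measure_hit_le:
  assumes "finite S"
  shows "measure Joint (hit S) \<le> card S * algorithm_revealment f nx"
proof -
  interpret Joint: prob_space Joint by (rule prob_space_Joint)
  have "hit S = (\<Union>i\<in>S. {p. i \<in> revealed_set p})" by (auto simp: hit_def)
  then have "measure Joint (hit S) \<le> (\<Sum>i\<in>S. measure Joint {p. i \<in> revealed_set p})"
    using assms sets_revealed_set by (simp add: Joint.finite_measure_subadditive_finite image_subset_iff)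
  also have "\<dots> \<le> (\<Sum>i\<in>S. algorithm_revealment f nx)"
    by (intro sum_mono measure_revealed_set_le)
  finally show ?thesis by simp
qed

lemma fourier_eq_integral_hit:
  assumes "finite S" and "S \<noteq> {}"
  shows "fourier f S = (\<integral>p. indicator (hit S) p * (f (snd p) * chi S (snd p)) \<partial>Joint)"
proof -
  interpret Joint: prob_space Joint by (rule prob_space_Joint)
  define g where "g p = f (snd p) * chi S (snd p)" for p :: "(nat \<Rightarrow> bool) \<times> (nat \<Rightarrow> bool)"
  have [measurable]: "g \<in> borel_measurable Joint" unfolding g_def[abs_def] by measurable
  have integrable: "integrable Joint (\<lambda>p. indicator A p * g p)" if "A \<in> sets Joint" for A
  proof (rule Joint.integrable_bounded)
    show "(\<lambda>p. indicator A p * g p) \<in> borel_measurable Joint" using that by measurable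
    show "\<bar>indicator A p * g p\<bar> \<le> 1" for p by (simp add: g_def indicator_def abs_mult)
  qed
  have hit: "hit S \<in> sets Joint" and miss: "UNIV - hit S \<in> sets Joint"
    using sets_hit[OF assms(1)] sets.compl_sets[OF sets_hit[OF assms(1)]] by simp_all
  obtain j where j: "j \<in> S" using assms(2) by blast
  have miss_zero: "(\<integral>p. indicator (UNIV - hit S) p * g p \<partial>Joint) = 0"
  proof (rule integral_flip_antisymmetric[where j = j, OF _ miss])
    show "flip_input j p \<in> UNIV - hit S" if "p \<in> UNIV - hit S" for p
      using that j revealed_set_flip_unrevealed[of j p] by (auto simp: hit_def)
    show "AE p in Joint. p \<in> UNIV - hit S \<longrightarrow> g (flip_input j p) = - g p"
      using AE_consistent AE_flip_input[OF AE_consistent, of j]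
    proof eventually_elim
      case (elim p)
      show ?case
      proof
        assume "p \<in> UNIV - hit S"
        then have "j \<notin> revealed_set p" using j by (auto simp: hit_def)
        then show "g (flip_input j p) = - g p"
          using f_flip_unrevealed[OF elim] chi_flip_bit[OF assms(1)] j by (simp add: g_def)
      qed
    qed
  qed simp
  have "fourier f S = (\<integral>p. g p \<partial>Joint)"
    unfolding fourier_def g_def by (rule integral_snd_Joint[symmetric]) measurable
  also have "\<dots> = (\<integral>p. indicator (hit S) p * g p + indicator (UNIV - hit S) p * g p \<partial>Joint)"
    by (rule Bochner_Integration.integral_cong) (auto simp: indicator_def)
  also have "\<dots> = (\<integral>p. indicator (hit S) p * g p \<partial>Joint) + (\<integral>p. indicator (UNIV - hit S) p * g p \<partial>Joint)"
    by (intro Bochner_Integration.integral_add integrable hit miss)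
  finally show ?thesis using miss_zero by (simp add: g_def)
qed

definition hit_expansion :: "nat set set \<Rightarrow> (nat \<Rightarrow> bool) \<times> (nat \<Rightarrow> bool) \<Rightarrow> real" where
  "hit_expansion F p = (\<Sum>S\<in>F. fourier f S * chi S (snd p) * indicator (hit S) p)"

lemma borel_measurable_hit_expansion [measurable]:
  assumes "\<And>S. S \<in> F \<Longrightarrow> finite S"
  shows "hit_expansion F \<in> borel_measurable Joint"
proof -
  have [measurable]: "hit S \<in> sets Joint" if "S \<in> F" for S
    using sets_hit assms(1) that by blast
  show ?thesis unfolding hit_expansion_def[abs_def] by measurable
qed

lemma abs_hit_expansion_le: "\<bar>hit_expansion F p\<bar> \<le> (\<Sum>S\<in>F. \<bar>fourier f S\<bar>)"
proof -
  have "\<bar>hit_expansion F p\<bar> \<le> (\<Sum>S\<in>F. \<bar>fourier f S * chi S (snd p) * indicator (hit S) p\<bar>)"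
    unfolding hit_expansion_def by (rule sum_abs)
  also have "\<dots> \<le> (\<Sum>S\<in>F. \<bar>fourier f S\<bar>)"
    by (intro sum_mono) (simp add: abs_mult indicator_def)
  finally show ?thesis .
qed

lemma integral_f_hit_expansion:
  assumes "finite F" and "\<And>S. S \<in> F \<Longrightarrow> finite S \<and> S \<noteq> {}"
  shows "(\<integral>p. f (snd p) * hit_expansion F p \<partial>Joint) = (\<Sum>S\<in>F. (fourier f S)\<^sup>2)"
proof -
  interpret Joint: prob_space Joint by (rule prob_space_Joint)
  define Y where "Y S p = indicator (hit S) p * (f (snd p) * chi S (snd p))" for S p
  have integrable: "integrable Joint (Y S)" if "S \<in> F" for S
  proof (rule Joint.integrable_bounded)
    have [measurable]: "hit S \<in> sets Joint" using sets_hit assms(2) that by blast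
    show "Y S \<in> borel_measurable Joint" unfolding Y_def[abs_def] by measurable
    show "\<bar>Y S p\<bar> \<le> 1" for p by (simp add: Y_def indicator_def abs_mult)
  qed
  have "(\<integral>p. f (snd p) * hit_expansion F p \<partial>Joint) = (\<integral>p. (\<Sum>S\<in>F. fourier f S * Y S p) \<partial>Joint)"
    by (simp add: hit_expansion_def Y_def sum_distrib_left mult_ac)
  also have "\<dots> = (\<Sum>S\<in>F. fourier f S * (\<integral>p. Y S p \<partial>Joint))"
    using integrable by simp
  also have "\<dots> = (\<Sum>S\<in>F. (fourier f S)\<^sup>2)"
    using fourier_eq_integral_hit assms(2) by (simp add: Y_def power2_eq_square)
  finally show ?thesis .
qed

lemma integral_hit_expansion_sq:
  assumes "finite F" and "\<And>S. S \<in> F \<Longrightarrow> finite S \<and> card S = k"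
  shows "(\<integral>p. (hit_expansion F p)\<^sup>2 \<partial>Joint) = (\<Sum>S\<in>F. (fourier f S)\<^sup>2 * measure Joint (hit S))"
proof -
  interpret Joint: prob_space Joint by (rule prob_space_Joint)
  define X where "X S S' p = chi S (snd p) * chi S' (snd p) * (indicator (hit S) p * indicator (hit S') p)"
    for S S' p
  have integrable: "integrable Joint (X S S')" if "S \<in> F" "S' \<in> F" for S S'
  proof (rule Joint.integrable_bounded)
    have [measurable]: "hit S \<in> sets Joint" "hit S' \<in> sets Joint" using sets_hit assms(2) that by blast+
    show "X S S' \<in> borel_measurable Joint" unfolding X_def[abs_def] by measurable
    show "\<bar>X S S' p\<bar> \<le> 1" for p by (simp add: X_def indicator_def abs_mult)
  qed
  have integral_X: "(\<integral>p. X S S' p \<partial>Joint) = (if S = S' then measure Joint (hit S) else 0)"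
    if "S \<in> F" "S' \<in> F" for S S'
  proof (cases "S = S'")
    case True
    then have "(\<integral>p. X S S' p \<partial>Joint) = (\<integral>p. indicator (hit S) p \<partial>Joint)"
      by (intro Bochner_Integration.integral_cong) (auto simp: X_def indicator_def)
    then show ?thesis using True sets_hit assms(2) that by simp
  next
    case False
    then show ?thesis using integral_chi_hit_orthogonal assms(2) that by (simp add: X_def)
  qed
  have "(\<integral>p. (hit_expansion F p)\<^sup>2 \<partial>Joint) = (\<integral>p. (\<Sum>S\<in>F. \<Sum>S'\<in>F. fourier f S * fourier f S' * X S S' p) \<partial>Joint)"
    by (simp add: power2_eq_square hit_expansion_def X_def sum_product mult_ac)
  also have "\<dots> = (\<Sum>S\<in>F. \<Sum>S'\<in>F. fourier f S * fourier f S' * (\<integral>p. X S S' p \<partial>Joint))"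
    using integrable by (simp add: integrable_sum)
  also have "\<dots> = (\<Sum>S\<in>F. (fourier f S)\<^sup>2 * measure Joint (hit S))"
  proof (rule sum.cong[OF refl])
    fix S assume S: "S \<in> F"
    have "(\<Sum>S'\<in>F. fourier f S * fourier f S' * (\<integral>p. X S S' p \<partial>Joint))
        = (\<Sum>S'\<in>F. if S' = S then (fourier f S)\<^sup>2 * measure Joint (hit S) else 0)"
      using S by (intro sum.cong refl) (auto simp: integral_X power2_eq_square)
    then show "(\<Sum>S'\<in>F. fourier f S * fourier f S' * (\<integral>p. X S S' p \<partial>Joint))
        = (fourier f S)\<^sup>2 * measure Joint (hit S)"
      using assms(1) S by simp
  qed
  finally show ?thesis .
qed

lemma sum_fourier_sq_le:
  assumes "finite F" and "F \<subseteq> {S. finite S \<and> card S = k}" and "k \<ge> 1"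
  shows "(\<Sum>S\<in>F. (fourier f S)\<^sup>2) \<le> real k * algorithm_revealment f nx"
proof -
  interpret Joint: prob_space Joint by (rule prob_space_Joint)
  define a where "a = (\<Sum>S\<in>F. (fourier f S)\<^sup>2)"
  define B where "B = (\<Sum>S\<in>F. \<bar>fourier f S\<bar>)"
  define g where "g p = f (snd p) * hit_expansion F p" for p
  have F: "finite S \<and> card S = k" "S \<noteq> {}" if "S \<in> F" for S
    using assms(2,3) that by auto
  have [measurable]: "hit_expansion F \<in> borel_measurable Joint"
    using F by (intro borel_measurable_hit_expansion) blast
  have [measurable]: "g \<in> borel_measurable Joint" unfolding g_def[abs_def] by measurable
  have abs_g: "\<bar>g p\<bar> \<le> B" for p
    using abs_hit_expansion_le by (simp add: g_def B_def abs_mult)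
  have integrable_g: "integrable Joint g"
    using abs_g by (intro Joint.integrable_bounded) simp_all
  have integrable_g_sq: "integrable Joint (\<lambda>p. (g p)\<^sup>2)"
  proof (rule Joint.integrable_bounded)
    show "\<bar>(g p)\<^sup>2\<bar> \<le> B\<^sup>2" for p
      using power_mono[OF abs_g[of p] abs_ge_zero, of 2] by simp
  qed simp
  have "(\<integral>p. g p \<partial>Joint) = a"
    unfolding a_def g_def using F by (intro integral_f_hit_expansion assms(1)) blast
  then have "a\<^sup>2 \<le> (\<integral>p. (g p)\<^sup>2 \<partial>Joint)"
    using Joint.square_expectation_le[OF integrable_g integrable_g_sq] by simp
  also have "\<dots> = (\<Sum>S\<in>F. (fourier f S)\<^sup>2 * measure Joint (hit S))"
    using integral_hit_expansion_sq[OF assms(1), of k] F by (simp add: g_def power_mult_distrib)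
  also have "\<dots> \<le> (\<Sum>S\<in>F. (fourier f S)\<^sup>2 * (real k * algorithm_revealment f nx))"
  proof (intro sum_mono mult_left_mono)
    fix S assume "S \<in> F"
    then show "measure Joint (hit S) \<le> real k * algorithm_revealment f nx"
      using measure_hit_le[of S] F(1)[of S] by simp
  qed simp
  also have "\<dots> = real k * algorithm_revealment f nx * a"
    by (simp add: a_def sum_distrib_left mult.commute)
  finally have "a * a \<le> (real k * algorithm_revealment f nx) * a" by (simp add: power2_eq_square)
  moreover have "0 \<le> a" "0 \<le> real k * algorithm_revealment f nx"
    using algorithm_revealment_nonneg by (simp_all add: a_def sum_nonneg)
  ultimately show ?thesis
    unfolding a_def[symmetric] by (cases "a = 0") (auto simp: mult_le_cancel_right)
qed

end

text \<open>The infimum defining \<open>revealment\<close> ranges over a nonempty set: querying the bits in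
  order is valid because \<open>f\<close> is finitary.\<close>

definition query_in_order :: algorithm where
  "query_in_order r h = length h"

lemma queried_query_in_order: "queried query_in_order r \<omega> n = {..<n}"
  by (induction n) (auto simp: queried_Suc query_in_order_def lessThan_Suc)

lemma valid_query_in_order:
  assumes "boolean_function f" and "finitary f"
  shows "valid_algorithm f query_in_order"
  unfolding valid_algorithm_def
proof (intro conjI allI)
  show "(\<lambda>r. query_in_order r h) \<in> measurable Cube (count_space UNIV)" for h
    by (simp add: query_in_order_def)
next
  have "AE \<omega> in Cube. \<exists>n. witness f {..<n} \<omega>"
    using assms(2) unfolding finitary_def
  proof eventually_elim
    case (elim \<omega>)
    then obtain W where "finite W" "witness f W \<omega>" by blast
    moreover from \<open>finite W\<close> obtain n where "W \<subseteq> {..<n}" using finite_nat_bounded by blast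
    ultimately show ?case using witness_mono by blast
  qed
  then show "AE p in Joint. \<exists>n. witness f (queried query_in_order (fst p) (snd p) n) (snd p)"
    unfolding queried_query_in_order by (rule AE_snd_Joint)
next
  fix i
  define T where "T \<omega> = (LEAST n. witness f {..<n} \<omega>)" for \<omega>
  have "(\<lambda>\<omega>. witness f {..<n} \<omega>) \<in> measurable Cube (count_space UNIV)" for n
  proof -
    have "{\<omega> \<in> space Cube. witness f {..<n} \<omega>} \<in> sets Cube"
      using sets_witness[OF assms(1), of "{..<n}"] by simp
    from pred_sets1[OF this measurable_ident] show ?thesis by simp
  qed
  then have "T \<in> measurable Cube (count_space UNIV)"
    unfolding T_def[abs_def] by (rule measurable_Least)
  then have "{p \<in> space Joint. i < T (snd p)} \<in> sets Joint" by measurable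
  moreover have "revealed f query_in_order (fst p) (snd p) = {..<T (snd p)}" for p
    by (simp add: revealed_def stop_time_def queried_query_in_order T_def)
  ultimately show "{p \<in> space Joint. i \<in> revealed f query_in_order (fst p) (snd p)} \<in> sets Joint"
    by simp
qed

lemma sum_fourier_sq_le_revealment:
  assumes "boolean_function f" and "finitary f" and "k \<ge> 1"
    and "finite F" and "F \<subseteq> {S. finite S \<and> card S = k}"
  shows "(\<Sum>S\<in>F. (fourier f S)\<^sup>2) \<le> real k * revealment f"
proof -
  define a where "a = (\<Sum>S\<in>F. (fourier f S)\<^sup>2)"
  have "a / real k \<le> algorithm_revealment f nx" if "valid_algorithm f nx" for nx
  proof -
    interpret valid_query_algorithm f nx
      using assms(1) that by unfold_locales (simp_all add: valid_algorithm_def)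
    show ?thesis
      using sum_fourier_sq_le[OF assms(4,5,3)] assms(3) by (simp add: a_def divide_le_eq mult.commute)
  qed
  then have "a / real k \<le> revealment f"
    unfolding revealment_def using valid_query_in_order[OF assms(1,2)]
    by (intro cINF_greatest) (auto simp: algorithm_revealment_def)
  then show ?thesis using assms(3) by (simp add: a_def divide_le_eq mult.commute)
qed

theorem mainTheorem19:
  fixes f :: "(nat \<Rightarrow> bool) \<Rightarrow> real" and k :: nat
  assumes "boolean_function f" and "finitary f" and "k \<ge> 1"
  shows "(\<Sum>\<^sub>\<infinity> S\<in>{S. finite S \<and> card S = k}. ennreal ((fourier f S)\<^sup>2))
           \<le> ennreal (revealment f * real k * (\<integral>\<omega>. (f \<omega>)\<^sup>2 \<partial>Cube))"
proof (rule infsum_le_finite_sums)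
  show "(\<lambda>S. ennreal ((fourier f S)\<^sup>2)) summable_on {S. finite S \<and> card S = k}"
    by (rule nonneg_summable_on_complete) simp
  interpret Cube: prob_space Cube by (rule prob_space_Cube)
  have norm: "(\<integral>\<omega>. (f \<omega>)\<^sup>2 \<partial>Cube) = 1"
    using Cube.prob_space boolean_function_squared[OF assms(1)] by simp
  fix F :: "nat set set" assume F: "finite F" "F \<subseteq> {S. finite S \<and> card S = k}"
  have "(\<Sum>S\<in>F. ennreal ((fourier f S)\<^sup>2)) = ennreal (\<Sum>S\<in>F. (fourier f S)\<^sup>2)"
    by simp
  also have "\<dots> \<le> ennreal (revealment f * real k * (\<integral>\<omega>. (f \<omega>)\<^sup>2 \<partial>Cube))"
    using sum_fourier_sq_le_revealment[OF assms F] by (intro ennreal_leI) (simp add: norm mult.commute)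
  finally show "(\<Sum>S\<in>F. ennreal ((fourier f S)\<^sup>2)) \<le> ennreal (revealment f * real k * (\<integral>\<omega>. (f \<omega>)\<^sup>2 \<partial>Cube))" .
qed

end
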